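(* Let $w$ be a metric on a finite set $V$, let $T$ be a minimum spanning tree of $G_w$, and let $\mathcal{T}$ be a collection of pairwise edge-disjoint subtrees of $T$. Then $$\mathsf{TSP}(w)\le 2\cdot \mathsf{MST}(w)-\frac12\sum_{T'\in\mathcal{T}}\mathsf{adv}(T').$$
   Context: $V$ is a finite set with $|V|=n\ge 3$ and $w$ a metric on $V$. $G_w$ is the complete graph on $V$ where the edge (pair) $(u,v)$ has weight $w(u,v)$; for a set (or multiset) $E'$ of pairs, $w(E')=\sum_{e\in E'}w(e)$, and for a subgraph $H$, $w(H)=w(E(H))$. $\mathsf{MST}(w)$ is the weight of a minimum spanning tree of $G_w$ and $\mathsf{TSP}(w)$ is the minimum weight of a Hamiltonian cycle of $G_w$. Fix a minimum spanning tree $T$ of $G_w$. For a pair $e=(u,v)$ of distinct vertices, $P^T_e$ denotes the unique $u$–$v$ path in $T$. An edge $f\in E(T)$ is covered by a pair $e$ iff $f\in E(P^T_e)$ (in particular an edge of $T$ covers exactly itself); $\mathsf{cov}(e)$ is the set of edges of $T$ covered by $e$, and $\mathsf{cov}(E')=\bigcup_{e\in E'}\mathsf{cov}(e)$. For a subtree $T'$ of $T$, $\mathsf{cov}(E',T')=\mathsf{cov}(E')\cap E(T')$, and the cover advantage of $E'$ on $T'$ is $\mathsf{adv}(E',T')=w(\mathsf{cov}(E',T'))-w(E')$. The optimal cover advantage $\mathsf{adv}(T')$ is the maximum of $\mathsf{adv}(E',T')$ over all sets $E'$ of pairs each having at least one endpoint in $V(T')$. *)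

theory Defs
  imports Complex_Main
begin

definition is_metric :: "'a set \<Rightarrow> ('a \<Rightarrow> 'a \<Rightarrow> real) \<Rightarrow> bool" where
  "is_metric V w \<longleftrightarrow>
     (\<forall>u\<in>V. w u u = 0) \<and>
     (\<forall>u\<in>V. \<forall>v\<in>V. u \<noteq> v \<longrightarrow> w u v > 0) \<and>
     (\<forall>u\<in>V. \<forall>v\<in>V. w u v = w v u) \<and>
     (\<forall>u\<in>V. \<forall>v\<in>V. \<forall>x\<in>V. w u x \<le> w u v + w v x)"

definition pairs :: "'a set \<Rightarrow> 'a set set" where
  "pairs V = {{u, v} | u v. u \<in> V \<and> v \<in> V \<and> u \<noteq> v}"

definition ew :: "('a \<Rightarrow> 'a \<Rightarrow> real) \<Rightarrow> 'a set \<Rightarrow> real" where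
  "ew w e = (THE c. \<exists>u v. e = {u, v} \<and> c = w u v)"

definition wt :: "('a \<Rightarrow> 'a \<Rightarrow> real) \<Rightarrow> 'a set set \<Rightarrow> real" where
  "wt w F = (\<Sum>e\<in>F. ew w e)"

definition path_edges :: "'a list \<Rightarrow> 'a set set" where
  "path_edges xs = {{xs ! i, xs ! (i + 1)} | i. i + 1 < length xs}"

definition is_path :: "'a set set \<Rightarrow> 'a \<Rightarrow> 'a \<Rightarrow> 'a list \<Rightarrow> bool" where
  "is_path F u v xs \<longleftrightarrow> xs \<noteq> [] \<and> hd xs = u \<and> last xs = v \<and> distinct xs \<and>
     (\<forall>i. i + 1 < length xs \<longrightarrow> {xs ! i, xs ! (i + 1)} \<in> F)"

text \<open>A cycle: closed walk x0 x1 ... xk = x0 with k >= 3 and x1..xk distinct.\<close>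
definition is_cycle :: "'a set set \<Rightarrow> 'a list \<Rightarrow> bool" where
  "is_cycle F xs \<longleftrightarrow> length xs \<ge> 4 \<and> hd xs = last xs \<and> distinct (tl xs) \<and>
     (\<forall>i. i + 1 < length xs \<longrightarrow> {xs ! i, xs ! (i + 1)} \<in> F)"

definition is_tree :: "'a set \<Rightarrow> 'a set set \<Rightarrow> bool" where
  "is_tree VS ES \<longleftrightarrow> VS \<noteq> {} \<and> ES \<subseteq> pairs VS \<and>
     (\<forall>u\<in>VS. \<forall>v\<in>VS. \<exists>xs. is_path ES u v xs) \<and>
     \<not> (\<exists>xs. is_cycle ES xs)"

definition spanning_tree :: "'a set \<Rightarrow> 'a set set \<Rightarrow> bool" where
  "spanning_tree V F \<longleftrightarrow> is_tree V F"

definition MST :: "'a set \<Rightarrow> ('a \<Rightarrow> 'a \<Rightarrow> real) \<Rightarrow> real" where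
  "MST V w = Min {wt w F | F. spanning_tree V F}"

definition is_mst :: "'a set \<Rightarrow> ('a \<Rightarrow> 'a \<Rightarrow> real) \<Rightarrow> 'a set set \<Rightarrow> bool" where
  "is_mst V w T \<longleftrightarrow> spanning_tree V T \<and> wt w T = MST V w"

definition ham_cycle :: "'a set \<Rightarrow> 'a set set \<Rightarrow> bool" where
  "ham_cycle V H \<longleftrightarrow> (\<exists>xs. distinct xs \<and> set xs = V \<and>
      H = {{xs ! i, xs ! ((i + 1) mod length xs)} | i. i < length xs})"

definition TSP :: "'a set \<Rightarrow> ('a \<Rightarrow> 'a \<Rightarrow> real) \<Rightarrow> real" where
  "TSP V w = Min {wt w H | H. ham_cycle V H}"

definition is_subtree :: "'a set \<Rightarrow> 'a set set \<Rightarrow> 'a set \<times> 'a set set \<Rightarrow> bool" where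
  "is_subtree V T S \<longleftrightarrow> fst S \<subseteq> V \<and> snd S \<subseteq> T \<and> is_tree (fst S) (snd S)"

text \<open>Edges of T covered by the pair e: the edges of the (unique) T-path between its endpoints.\<close>
definition cov :: "'a set set \<Rightarrow> 'a set \<Rightarrow> 'a set set" where
  "cov T e = \<Union> {path_edges xs | xs u v. e = {u, v} \<and> is_path T u v xs}"

definition covs :: "'a set set \<Rightarrow> 'a set set \<Rightarrow> 'a set set" where
  "covs T E' = (\<Union>e\<in>E'. cov T e)"

definition adv :: "('a \<Rightarrow> 'a \<Rightarrow> real) \<Rightarrow> 'a set set \<Rightarrow> 'a set set \<Rightarrow> 'a set \<times> 'a set set \<Rightarrow> real" where
  "adv w T E' S = wt w (covs T E' \<inter> snd S) - wt w E'"

definition opt_adv :: "'a set \<Rightarrow> ('a \<Rightarrow> 'a \<Rightarrow> real) \<Rightarrow> 'a set set \<Rightarrow> 'a set \<times> 'a set set \<Rightarrow> real" where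
  "opt_adv V w T S = Max {adv w T E' S | E'. E' \<subseteq> pairs V \<and> (\<forall>e\<in>E'. e \<inter> fst S \<noteq> {})}"

end

theory Submission
  imports Defs "HOL-Library.Multiset"
begin

text \<open>
  Choose for every subtree S an optimal set of pairs E_S and let E be their union. For R \<subseteq> E
  let D(R) be the set of tree edges covered by an odd number of pairs of R. The multigraph
  T + (T - D(R)) + R contains T and has only even degrees, so an Euler tour shortcut to a
  Hamiltonian cycle gives TSP \<le> 2 w(T) - w(D(R)) + w(R). Over all R \<subseteq> E, every pair of E lies in
  R and every edge covered by E lies in D(R) for exactly half of the choices, hence some R has
  w(R) - w(D(R)) \<le> (w(E) - w(cov E)) / 2. Finally, since the subtrees are edge-disjoint,
  \<Sum> adv(S) \<le> w(cov E) - w(E).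
\<close>

section \<open>Edge multisets of closed walks\<close>

text \<open>The list x_0 ... x_{k-1} is read as the closed walk x_0 ... x_{k-1} x_0; a one-element
  list yields the loop {x_0}.\<close>
definition cycle_edges :: "'a list \<Rightarrow> 'a set multiset" where
  "cycle_edges xs = mset (map (\<lambda>(a, b). {a, b}) (zip xs (rotate1 xs)))"

lemma size_cycle_edges [simp]: "size (cycle_edges xs) = length xs"
  by (simp add: cycle_edges_def)

lemma cycle_edges_rotate1 [simp]: "cycle_edges (rotate1 xs) = cycle_edges xs"
proof (cases xs)
  case (Cons x ys)
  then show ?thesis
  proof (cases ys)
    case (Cons y zs)
    have "zip (y # zs @ [x]) (zs @ [x] @ [y]) = zip (y # zs) (zs @ [x]) @ [(x, y)]"
      using zip_append[of "y # zs" "zs @ [x]" "[x]" "[y]"] by simp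
    then show ?thesis using Cons \<open>xs = x # ys\<close> by (simp add: cycle_edges_def)
  qed (simp add: \<open>xs = x # ys\<close>)
qed simp

lemma cycle_edges_rotate [simp]: "cycle_edges (rotate k xs) = cycle_edges xs"
  by (induction k) (simp_all add: rotate_def)

lemma cycle_edges_append:
  assumes "xs \<noteq> []" "ys \<noteq> []" "hd xs = hd ys"
  shows "cycle_edges (xs @ ys) = cycle_edges xs + cycle_edges ys"
proof -
  obtain v a b where "xs = v # a" "ys = v # b"
    using assms by (cases xs; cases ys) auto
  moreover have "zip (v # a @ v # b) (a @ v # b @ [v]) = zip (v # a) (a @ [v]) @ zip (v # b) (b @ [v])"
    using zip_append[of "v # a" "a @ [v]" "v # b" "b @ [v]"] by simp
  ultimately show ?thesis by (simp add: cycle_edges_def)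
qed

lemma zip_snoc_right:
  "length xs = Suc (length ys) \<Longrightarrow> zip xs (ys @ [a]) = zip (butlast xs) ys @ [(last xs, a)]"
  by (induction ys arbitrary: xs) (auto simp: length_Suc_conv)

lemma cycle_edges_snoc:
  assumes "xs \<noteq> []"
  shows "cycle_edges (xs @ [x]) + {#{last xs, hd xs}#} = cycle_edges xs + {#{last xs, x}, {x, hd xs}#}"
proof -
  obtain c cs where xs: "xs = c # cs" using assms by (cases xs) auto
  have "zip (c # cs @ [x]) (cs @ [x] @ [c]) = zip (c # cs) (cs @ [x]) @ [(x, c)]"
    using zip_append[of "c # cs" "cs @ [x]" "[x]" "[c]"] by simp
  moreover have "zip (c # cs) (cs @ [x]) = zip (butlast (c # cs)) cs @ [(last (c # cs), x)]"
    "zip (c # cs) (cs @ [c]) = zip (butlast (c # cs)) cs @ [(last (c # cs), c)]"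
    by (simp_all add: zip_snoc_right)
  ultimately show ?thesis unfolding cycle_edges_def xs by (simp add: insert_commute)
qed

lemma mem_cycle_edges_iff:
  "e \<in># cycle_edges xs \<longleftrightarrow> (\<exists>i<length xs. e = {xs ! i, xs ! (Suc i mod length xs)})"
proof -
  have "e \<in># cycle_edges xs \<longleftrightarrow> e \<in> set (map (\<lambda>(a, b). {a, b}) (zip xs (rotate1 xs)))"
    by (simp add: cycle_edges_def)
  also have "\<dots> \<longleftrightarrow> (\<exists>i<length xs. e = {xs ! i, rotate1 xs ! i})"
    unfolding in_set_conv_nth by auto
  finally show ?thesis by (auto simp: nth_rotate1)
qed

lemma cycle_edges_elem:
  assumes "e \<in># cycle_edges xs"
  obtains a b where "e = {a, b}" "a \<in> set xs" "b \<in> set xs"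
proof -
  obtain i where i: "i < length xs" "e = {xs ! i, xs ! (Suc i mod length xs)}"
    using assms unfolding mem_cycle_edges_iff by blast
  then have "Suc i mod length xs < length xs" by (cases xs) simp_all
  then show thesis using i nth_mem that by blast
qed

lemma vertex_in_cycle_edges:
  assumes "x \<in> set xs"
  obtains e where "e \<in># cycle_edges xs" "x \<in> e"
proof -
  obtain i where "i < length xs" "xs ! i = x" using assms by (auto simp: in_set_conv_nth)
  then show thesis using that[of "{xs ! i, xs ! (Suc i mod length xs)}"]
    unfolding mem_cycle_edges_iff by blast
qed

lemma ex_rotate_hd:
  assumes "v \<in> set xs"
  obtains k where "hd (rotate k xs) = v"
proof -
  obtain i where i: "i < length xs" "xs ! i = v" using assms by (auto simp: in_set_conv_nth)
  then have "xs \<noteq> []" by auto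
  then have "hd (rotate i xs) = v" using i nth_rotate[of 0 xs i] by (simp add: hd_conv_nth)
  then show thesis by (rule that)
qed

lemma ex_rotate_closing_edge:
  assumes "e \<in># cycle_edges xs"
  obtains k where "e = {last (rotate k xs), hd (rotate k xs)}"
proof -
  obtain i where i: "i < length xs" "e = {xs ! i, xs ! (Suc i mod length xs)}"
    using assms unfolding mem_cycle_edges_iff by blast
  let ?n = "length xs"
  have "xs \<noteq> []" using i by auto
  then have "Suc i + (?n - 1) = i + ?n" by (cases xs) auto
  then have "(Suc i + (?n - 1)) mod ?n = i" using i by simp
  moreover have "last (rotate (Suc i) xs) = xs ! ((Suc i + (?n - 1)) mod ?n)"
    using \<open>xs \<noteq> []\<close> nth_rotate[of "?n - 1" xs "Suc i"] by (simp add: last_conv_nth del: rotate_Suc)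
  moreover have "hd (rotate (Suc i) xs) = xs ! (Suc i mod ?n)"
    using \<open>xs \<noteq> []\<close> nth_rotate[of 0 xs "Suc i"] by (simp add: hd_conv_nth del: rotate_Suc)
  ultimately show thesis using i that[of "Suc i"] by (simp add: insert_commute)
qed

lemma cycle_edges_reroute:
  assumes "{a, b} \<in># cycle_edges C"
  obtains C' where "set C' = insert x (set C)"
    "cycle_edges C' + {#{a, b}#} = cycle_edges C + {#{a, x}, {x, b}#}"
proof -
  obtain k where k: "{a, b} = {last (rotate k C), hd (rotate k C)}"
    using ex_rotate_closing_edge[OF assms] .
  let ?C = "rotate k C"
  have "?C \<noteq> []" using assms by (auto simp: cycle_edges_def)
  then have "cycle_edges (?C @ [x]) + {#{a, b}#} = cycle_edges C + {#{last ?C, x}, {x, hd ?C}#}"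
    using cycle_edges_snoc[of ?C x] k by simp
  moreover have "{#{last ?C, x}, {x, hd ?C}#} = {#{a, x}, {x, b}#}"
    using k unfolding doubleton_eq_iff by (auto simp: insert_commute)
  ultimately show thesis using that[of "?C @ [x]"] by simp
qed

section \<open>Degrees in edge multisets\<close>

definition mdeg :: "'a \<Rightarrow> 'a set multiset \<Rightarrow> nat" where
  "mdeg x M = size (filter_mset (\<lambda>e. x \<in> e) M)"

definition loopless :: "'a set multiset \<Rightarrow> bool" where
  "loopless M \<longleftrightarrow> (\<forall>e\<in>#M. card e = 2)"

lemma mdeg_empty [simp]: "mdeg x {#} = 0"
  by (simp add: mdeg_def)

lemma mdeg_add_mset [simp]: "mdeg x (add_mset e M) = (if x \<in> e then 1 else 0) + mdeg x M"
  by (simp add: mdeg_def)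

lemma mdeg_union [simp]: "mdeg x (A + B) = mdeg x A + mdeg x B"
  by (simp add: mdeg_def)

lemma mdeg_mset_set: "finite S \<Longrightarrow> mdeg x (mset_set S) = card {e\<in>S. x \<in> e}"
  by (simp add: mdeg_def)

lemma mdeg_pos_elem:
  assumes "0 < mdeg x M"
  obtains e where "e \<in># M" "x \<in> e"
proof -
  have "filter_mset (\<lambda>e. x \<in> e) M \<noteq> {#}"
    using assms unfolding mdeg_def by (metis gr_implies_not0 size_empty)
  then obtain e where "e \<in># filter_mset (\<lambda>e. x \<in> e) M" by blast
  then show thesis using that by auto
qed

lemma loopless_add_mset [simp]: "loopless (add_mset e M) \<longleftrightarrow> card e = 2 \<and> loopless M"
  by (auto simp: loopless_def)

lemma loopless_union [simp]: "loopless (A + B) \<longleftrightarrow> loopless A \<and> loopless B"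
  by (auto simp: loopless_def)

lemma length_filter_disj:
  "\<forall>p\<in>set zs. \<not> (P p \<and> Q p) \<Longrightarrow>
    length (filter (\<lambda>p. P p \<or> Q p) zs) = length (filter P zs) + length (filter Q zs)"
  by (induction zs) auto

lemma length_filter_fst_zip:
  "length ys = length xs \<Longrightarrow> length (filter (\<lambda>p. fst p = x) (zip xs ys)) = count (mset xs) x"
  by (induction xs arbitrary: ys) (auto simp: length_Suc_conv)

lemma length_filter_snd_zip:
  "length ys = length xs \<Longrightarrow> length (filter (\<lambda>p. snd p = x) (zip xs ys)) = count (mset ys) x"
  by (induction xs arbitrary: ys) (auto simp: length_Suc_conv)

lemma mdeg_cycle_edges:
  assumes "loopless (cycle_edges xs)"
  shows "mdeg x (cycle_edges xs) = 2 * count (mset xs) x"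
proof -
  let ?zs = "zip xs (rotate1 xs)"
  have no_loop: "\<forall>p\<in>set ?zs. \<not> (fst p = x \<and> snd p = x)"
  proof
    fix p assume "p \<in> set ?zs"
    then have "{fst p, snd p} \<in># cycle_edges xs"
      unfolding cycle_edges_def by (auto simp: image_iff intro!: bexI[of _ p])
    then have "card {fst p, snd p} = 2" using assms unfolding loopless_def by blast
    then show "\<not> (fst p = x \<and> snd p = x)" by auto
  qed
  have "mdeg x (cycle_edges xs) = length (filter (\<lambda>e. x \<in> e) (map (\<lambda>(a, b). {a, b}) ?zs))"
    unfolding mdeg_def cycle_edges_def by (simp only: mset_filter[symmetric] size_mset)
  also have "\<dots> = length (filter (\<lambda>p. fst p = x \<or> snd p = x) ?zs)"
    by (simp add: filter_map comp_def case_prod_beta eq_commute)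
  also have "\<dots> = count (mset xs) x + count (mset (rotate1 xs)) x"
    using no_loop by (simp add: length_filter_disj length_filter_fst_zip length_filter_snd_zip)
  also have "\<dots> = 2 * count (mset xs) x" by (cases xs) simp_all
  finally show ?thesis .
qed

section \<open>Eulerian multigraphs\<close>

lemma card_2_other_elem:
  assumes "card e = 2" "v \<in> e"
  obtains x where "e = {v, x}" "x \<noteq> v"
  using assms by (auto simp: card_2_iff)

lemma subset_mset_add_mset_not_mem:
  "A \<subseteq># add_mset a B \<Longrightarrow> a \<notin># A \<Longrightarrow> A \<subseteq># B"
  unfolding subseteq_mset_def
  by (metis count_add_mset count_eq_zero_iff le_zero_eq nat_le_linear)

lemma even_mdeg_continue:
  assumes "loopless M" "\<forall>x. even (mdeg x M)" "{v, x} \<in># M" "x \<noteq> v"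
  obtains y M0 where "M = M0 + {#{v, x}, {x, y}#}" "y \<noteq> x"
proof -
  obtain M1 where M1: "M = add_mset {v, x} M1" using assms(3) by (blast dest: multi_member_split)
  have "mdeg x M = 1 + mdeg x M1" using M1 by simp
  moreover have "even (mdeg x M)" using assms(2) by blast
  ultimately have "0 < mdeg x M1" by presburger
  then obtain e' where "e' \<in># M1" "x \<in> e'" by (rule mdeg_pos_elem)
  moreover have "card e' = 2" using \<open>e' \<in># M1\<close> assms(1) M1 by (simp add: loopless_def)
  ultimately obtain y where "e' = {x, y}" "y \<noteq> x" by (metis card_2_other_elem)
  then show thesis using that[of _ y] M1 \<open>e' \<in># M1\<close> by (auto dest: multi_member_split)
qed

text \<open>Every edge of a loopless multigraph with even degrees lies on a closed walk inside it:
  from the edges {v, x} and {x, y} we recurse on the multigraph in which they are replaced by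
  the single edge {v, y}, and reroute the resulting walk through x.\<close>
lemma even_mdeg_cycle_through:
  assumes "loopless M" "\<forall>x. even (mdeg x M)" "e \<in># M" "v \<in> e"
  obtains C where "C \<noteq> []" "v \<in> set C" "cycle_edges C \<subseteq># M"
  using assms
proof (induction "size M" arbitrary: M e thesis rule: less_induct)
  case less
  have "card e = 2" using less.prems(2,4) unfolding loopless_def by blast
  then obtain x where e: "e = {v, x}" "x \<noteq> v" using less.prems(5) by (rule card_2_other_elem)
  then obtain y M0 where M0: "M = M0 + {#e, {x, y}#}" "y \<noteq> x"
    using even_mdeg_continue[OF less.prems(2,3)] less.prems(4) by metis
  show thesis
  proof (cases "y = v")
    case True
    then have "cycle_edges [v, x] = {#e, {x, y}#}" using e by (simp add: cycle_edges_def insert_commute)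
    then show thesis using less.prems(1)[of "[v, x]"] M0 by simp
  next
    case False
    let ?M' = "add_mset {v, y} M0"
    have loopless': "loopless ?M'" using less.prems(2) False unfolding M0(1) by simp
    have even': "\<forall>z. even (mdeg z ?M')"
    proof
      fix z
      have "even (mdeg z M)" using less.prems(3) by blast
      then show "even (mdeg z ?M')" using M0 e False by (auto split: if_splits)
    qed
    have smaller: "size ?M' < size M" using M0(1) by simp
    obtain C where C: "C \<noteq> []" "v \<in> set C" "cycle_edges C \<subseteq># ?M'"
      by (rule less.hyps[where e = "{v, y}", OF smaller _ loopless' even']) auto
    show thesis
    proof (cases "{v, y} \<in># cycle_edges C")
      case False
      have "cycle_edges C \<subseteq># M0" using subset_mset_add_mset_not_mem[OF C(3) False] .
      also have "M0 \<subseteq># M" using M0(1) by simp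
      finally show thesis by (rule less.prems(1)[OF C(1,2)])
    next
      case True
      then obtain C' where C': "set C' = insert x (set C)"
        "cycle_edges C' + {#{v, y}#} = cycle_edges C + {#{v, x}, {x, y}#}"
        by (rule cycle_edges_reroute)
      obtain D where D: "cycle_edges C = add_mset {v, y} D"
        using True by (blast dest: multi_member_split)
      have "D \<subseteq># M0" using C(3) D by simp
      moreover have "cycle_edges C' = D + {#e, {x, y}#}" using C'(2) D e by simp
      ultimately have "cycle_edges C' \<subseteq># M" using M0(1) by simp
      then show thesis by (rule less.prems(1)[rotated 2]) (use C' C in auto)
    qed
  qed
qed

lemma splice_closed_walks:
  assumes "C \<noteq> []" "W \<noteq> []" "v \<in> set C" "v \<in> set W"
  obtains W' where "W' \<noteq> []" "set W' = set C \<union> set W"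
    "cycle_edges W' = cycle_edges C + cycle_edges W"
proof -
  obtain k1 where "hd (rotate k1 W) = v" using ex_rotate_hd[OF assms(4)] .
  moreover obtain k2 where "hd (rotate k2 C) = v" using ex_rotate_hd[OF assms(3)] .
  ultimately show thesis
    using that[of "rotate k2 C @ rotate k1 W"] cycle_edges_append[of "rotate k2 C" "rotate k1 W"] assms(1,2)
    by simp
qed

text \<open>Splicing closed walks of M into W until every remaining edge of M avoids the walk.\<close>
lemma splice_even_mdeg:
  assumes "loopless M" "\<forall>x. even (mdeg x M)" "W \<noteq> []"
  obtains W' R where "cycle_edges W' + R = cycle_edges W + M" "R \<subseteq># M"
    "set W \<subseteq> set W'" "set W' \<subseteq> set W \<union> \<Union>(set_mset M)" "\<forall>e\<in>#R. e \<inter> set W' = {}"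
  using assms
proof (induction "size M" arbitrary: M W thesis rule: less_induct)
  case less
  show thesis
  proof (cases "\<exists>e\<in>#M. e \<inter> set W \<noteq> {}")
    case False
    then show thesis using less.prems(1)[of W M] by auto
  next
    case True
    then obtain e v where e: "e \<in># M" "v \<in> e" "v \<in> set W" by blast
    obtain C where C: "C \<noteq> []" "v \<in> set C" "cycle_edges C \<subseteq># M"
      using even_mdeg_cycle_through[OF less.prems(2,3) e(1,2)] .
    obtain W0 where W0: "W0 \<noteq> []" "set W0 = set C \<union> set W"
      "cycle_edges W0 = cycle_edges C + cycle_edges W"
      using splice_closed_walks[OF C(1) less.prems(4) C(2) e(3)] .
    obtain M' where M': "M = cycle_edges C + M'" using C(3) by (metis subset_mset.add_diff_inverse)
    have "loopless M'" "loopless (cycle_edges C)" using less.prems(2) unfolding M' by simp_all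
    have "even (mdeg x M')" for x
    proof -
      have "even (mdeg x M)" using less.prems(3) by blast
      then show ?thesis using mdeg_cycle_edges[OF \<open>loopless (cycle_edges C)\<close>] unfolding M' by simp
    qed
    then have even': "\<forall>x. even (mdeg x M')" by blast
    have smaller: "size M' < size M" using C(1) unfolding M' by simp
    obtain W' R where IH: "cycle_edges W' + R = cycle_edges W0 + M'" "R \<subseteq># M'"
      "set W0 \<subseteq> set W'" "set W' \<subseteq> set W0 \<union> \<Union>(set_mset M')" "\<forall>e\<in>#R. e \<inter> set W' = {}"
      by (rule less.hyps[OF smaller _ \<open>loopless M'\<close> even' W0(1)])
    have "set C \<subseteq> \<Union>(set_mset M)"
    proof
      fix z assume "z \<in> set C"
      then obtain f where "f \<in># cycle_edges C" "z \<in> f" by (rule vertex_in_cycle_edges)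
      then show "z \<in> \<Union>(set_mset M)" using C(3) by (auto dest: mset_subset_eqD)
    qed
    show thesis
    proof (rule less.prems(1)[of W' R])
      show "cycle_edges W' + R = cycle_edges W + M" using IH(1) W0(3) M' by (simp add: ac_simps)
      show "R \<subseteq># M" using IH(2) M' by (simp add: subset_mset.add_increasing)
      show "set W \<subseteq> set W'" using IH(3) W0(2) by simp
      show "set W' \<subseteq> set W \<union> \<Union>(set_mset M)"
        using IH(4) W0(2) \<open>set C \<subseteq> \<Union>(set_mset M)\<close> M' by auto
      show "\<forall>e\<in>#R. e \<inter> set W' = {}" by (rule IH(5))
    qed
  qed
qed

lemma metric_sym: "is_metric V w \<Longrightarrow> a \<in> V \<Longrightarrow> b \<in> V \<Longrightarrow> w a b = w b a"
  unfolding is_metric_def by (elim conjE) fast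

lemma metric_triangle:
  "is_metric V w \<Longrightarrow> a \<in> V \<Longrightarrow> b \<in> V \<Longrightarrow> c \<in> V \<Longrightarrow> w a c \<le> w a b + w b c"
  unfolding is_metric_def by (elim conjE) fast

lemma metric_zero: "is_metric V w \<Longrightarrow> a \<in> V \<Longrightarrow> w a a = 0"
  unfolding is_metric_def by blast

lemma metric_nonneg: "is_metric V w \<Longrightarrow> a \<in> V \<Longrightarrow> b \<in> V \<Longrightarrow> 0 \<le> w a b"
  using metric_triangle[of V w a b a] metric_sym[of V w a b] metric_zero[of V w a] by simp

lemma ew_doubleton:
  assumes "is_metric V w" "a \<in> V" "b \<in> V"
  shows "ew w {a, b} = w a b"
  unfolding ew_def
proof (rule the_equality)
  fix c assume "\<exists>u v. {a, b} = {u, v} \<and> c = w u v"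
  then obtain u v where "{a, b} = {u, v}" "c = w u v" by blast
  then show "c = w a b" using metric_sym[OF assms] unfolding doubleton_eq_iff by auto
qed blast

lemma ew_doubleton_nonneg: "is_metric V w \<Longrightarrow> a \<in> V \<Longrightarrow> b \<in> V \<Longrightarrow> 0 \<le> ew w {a, b}"
  by (simp add: ew_doubleton metric_nonneg)

lemma pairsE:
  assumes "e \<in> pairs V"
  obtains a b where "e = {a, b}" "a \<in> V" "b \<in> V" "a \<noteq> b"
  using assms unfolding pairs_def by blast

lemma ew_pairs_nonneg: "is_metric V w \<Longrightarrow> e \<in> pairs V \<Longrightarrow> 0 \<le> ew w e"
  by (auto elim: pairsE simp: ew_doubleton_nonneg)

lemma finite_pairs: "finite V \<Longrightarrow> finite (pairs V)"
  unfolding pairs_def by (rule finite_subset[of _ "Pow V"]) auto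

lemma card_pairs: "e \<in> pairs V \<Longrightarrow> card e = 2"
  by (auto elim: pairsE)

lemma pairs_subset: "e \<in> pairs V \<Longrightarrow> e \<subseteq> V"
  by (auto elim: pairsE)

definition mweight :: "('a \<Rightarrow> 'a \<Rightarrow> real) \<Rightarrow> 'a set multiset \<Rightarrow> real" where
  "mweight w M = (\<Sum>e\<in>#M. ew w e)"

lemma mweight_empty [simp]: "mweight w {#} = 0"
  by (simp add: mweight_def)

lemma mweight_add_mset [simp]: "mweight w (add_mset e M) = ew w e + mweight w M"
  by (simp add: mweight_def)

lemma mweight_union [simp]: "mweight w (A + B) = mweight w A + mweight w B"
  by (simp add: mweight_def)

lemma mweight_mset_set [simp]: "mweight w (mset_set S) = wt w S"
  unfolding mweight_def wt_def by (rule sum_unfold_sum_mset[symmetric])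

lemma mweight_nonneg: "(\<And>e. e \<in># M \<Longrightarrow> 0 \<le> ew w e) \<Longrightarrow> 0 \<le> mweight w M"
  by (induction M) auto

lemma ew_cycle_edges_nonneg:
  assumes "is_metric V w" "set xs \<subseteq> V" "e \<in># cycle_edges xs"
  shows "0 \<le> ew w e"
  using assms(3) by (rule cycle_edges_elem) (use assms(2) in \<open>blast intro: ew_doubleton_nonneg[OF assms(1)]\<close>)

lemma mweight_cycle_edges_snoc:
  "xs \<noteq> [] \<Longrightarrow> mweight w (cycle_edges (xs @ [x])) + ew w {last xs, hd xs}
    = mweight w (cycle_edges xs) + ew w {last xs, x} + ew w {x, hd xs}"
  using arg_cong[OF cycle_edges_snoc, of xs "mweight w" x] by simp

section \<open>Shortcutting closed walks\<close>

text \<open>Triangle inequality: skipping a repeated vertex does not increase the weight.\<close>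
lemma shortcut_closed_walk:
  assumes "is_metric V w" "set W \<subseteq> V"
  obtains D where "distinct D" "set D = set W" "mweight w (cycle_edges D) \<le> mweight w (cycle_edges W)"
  using assms(2)
proof (induction "length W" arbitrary: W thesis rule: less_induct)
  case less
  show thesis
  proof (cases "distinct W")
    case True
    then show thesis using less.prems(1) by blast
  next
    case False
    then obtain p x q r where W: "W = p @ [x] @ q @ [x] @ r" using not_distinct_decomp by blast
    let ?W = "q @ [x] @ r @ p"
    have "rotate (length p) W = x # ?W" unfolding W by (simp add: rotate_append)
    then have "cycle_edges W = cycle_edges (rotate1 (x # ?W))"
      using cycle_edges_rotate[of "length p" W] cycle_edges_rotate1[of "x # ?W"] by argo
    then have W_eq: "cycle_edges W = cycle_edges (?W @ [x])" by (simp only: rotate1.simps)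
    have set_W: "set ?W = set W" unfolding W by auto
    have ends: "last ?W \<in> V" "hd ?W \<in> V" "x \<in> V"
      using less.prems(2) set_W last_in_set[of ?W] hd_in_set[of ?W] unfolding W by auto
    have "w (last ?W) (hd ?W) \<le> w (last ?W) x + w x (hd ?W)"
      using metric_triangle[OF assms(1)] ends by blast
    then have "ew w {last ?W, hd ?W} \<le> ew w {last ?W, x} + ew w {x, hd ?W}"
      by (simp only: ew_doubleton[OF assms(1)] ends)
    then have shorter_weight: "mweight w (cycle_edges ?W) \<le> mweight w (cycle_edges W)"
      using mweight_cycle_edges_snoc[of ?W w x] W_eq by simp
    have shorter: "length ?W < length W" unfolding W by simp
    have in_V: "set ?W \<subseteq> V" using less.prems(2) set_W by simp
    obtain D where "distinct D" "set D = set ?W" "mweight w (cycle_edges D) \<le> mweight w (cycle_edges ?W)"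
      by (rule less.hyps[OF shorter _ in_V])
    then show thesis using less.prems(1) set_W shorter_weight by auto
  qed
qed

lemma wt_set_mset_le_mweight:
  "(\<And>e. e \<in># M \<Longrightarrow> 0 \<le> ew w e) \<Longrightarrow> wt w (set_mset M) \<le> mweight w M"
proof (induction M)
  case (add e M)
  have "0 \<le> ew w e" "wt w (set_mset M) \<le> mweight w M" using add by simp_all
  then show ?case by (cases "e \<in># M") (auto simp: wt_def insert_absorb)
qed (simp add: wt_def)

lemma ham_cycle_subset_Pow: "ham_cycle V H \<Longrightarrow> H \<subseteq> Pow V"
proof
  fix e assume "ham_cycle V H" "e \<in> H"
  then obtain xs i where "distinct xs" "set xs = V" "i < length xs"
    "e = {xs ! i, xs ! ((i + 1) mod length xs)}"
    unfolding ham_cycle_def by blast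
  moreover from this have "(i + 1) mod length xs < length xs" by (cases xs) simp_all
  ultimately show "e \<in> Pow V" by auto
qed

lemma TSP_le_ham_cycle:
  assumes "finite V" "ham_cycle V H"
  shows "TSP V w \<le> wt w H"
proof -
  have "{H. ham_cycle V H} \<subseteq> Pow (Pow V)" using ham_cycle_subset_Pow by blast
  then have "finite {H. ham_cycle V H}" using assms(1) by (simp add: finite_subset)
  then have "finite {wt w H | H. ham_cycle V H}" by (simp add: setcompr_eq_image)
  then show ?thesis unfolding TSP_def using assms(2) by (auto intro: Min_le)
qed

lemma TSP_le_closed_walk:
  assumes "finite V" "is_metric V w" "set W = V"
  shows "TSP V w \<le> mweight w (cycle_edges W)"
proof -
  obtain D where D: "distinct D" "set D = V" "mweight w (cycle_edges D) \<le> mweight w (cycle_edges W)"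
    using shortcut_closed_walk[OF assms(2)] assms(3) by (metis order.refl)
  then have "ham_cycle V (set_mset (cycle_edges D))"
    unfolding ham_cycle_def by (intro exI[of _ D]) (auto simp: mem_cycle_edges_iff)
  then have "TSP V w \<le> wt w (set_mset (cycle_edges D))" by (rule TSP_le_ham_cycle[OF assms(1)])
  also have "\<dots> \<le> mweight w (cycle_edges D)"
    using ew_cycle_edges_nonneg[OF assms(2)] D(2) by (blast intro: wt_set_mset_le_mweight)
  finally show ?thesis using D(3) by simp
qed

section \<open>Paths in trees\<close>

fun walk_edges :: "'a list \<Rightarrow> 'a set set" where
  "walk_edges (x # y # zs) = insert {x, y} (walk_edges (y # zs))"
| "walk_edges _ = {}"

lemma path_edges_Cons_Cons: "path_edges (x # y # zs) = insert {x, y} (path_edges (y # zs))"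
proof (intro equalityI subsetI)
  fix e assume "e \<in> path_edges (x # y # zs)"
  then obtain i where "i + 1 < length (x # y # zs)" "e = {(x # y # zs) ! i, (x # y # zs) ! (i + 1)}"
    unfolding path_edges_def by blast
  then show "e \<in> insert {x, y} (path_edges (y # zs))"
    unfolding path_edges_def by (cases i) auto
next
  fix e assume "e \<in> insert {x, y} (path_edges (y # zs))"
  then consider "e = {x, y}" | j where "j + 1 < length (y # zs)" "e = {(y # zs) ! j, (y # zs) ! (j + 1)}"
    unfolding path_edges_def by blast
  then show "e \<in> path_edges (x # y # zs)"
  proof cases
    case 1
    then show ?thesis unfolding path_edges_def by force
  next
    case (2 j)
    then have "Suc j + 1 < length (x # y # zs)" "e = {(x # y # zs) ! Suc j, (x # y # zs) ! (Suc j + 1)}"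
      by simp_all
    then show ?thesis unfolding path_edges_def by blast
  qed
qed

lemma path_edges_eq_walk_edges: "path_edges xs = walk_edges xs"
  by (induction xs rule: walk_edges.induct) (simp_all add: path_edges_Cons_Cons, simp_all add: path_edges_def)

lemma consecutive_in_iff_walk_edges:
  "(\<forall>i. i + 1 < length xs \<longrightarrow> {xs ! i, xs ! (i + 1)} \<in> F) \<longleftrightarrow> walk_edges xs \<subseteq> F"
  unfolding path_edges_eq_walk_edges[symmetric] path_edges_def by blast

lemma is_path_iff:
  "is_path F u v xs \<longleftrightarrow> xs \<noteq> [] \<and> hd xs = u \<and> last xs = v \<and> distinct xs \<and> walk_edges xs \<subseteq> F"
  unfolding is_path_def consecutive_in_iff_walk_edges by blast

lemma is_cycle_iff:
  "is_cycle F xs \<longleftrightarrow> length xs \<ge> 4 \<and> hd xs = last xs \<and> distinct (tl xs) \<and> walk_edges xs \<subseteq> F"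
  unfolding is_cycle_def consecutive_in_iff_walk_edges by blast

lemma walk_edges_append: "walk_edges (xs @ y # ys) = walk_edges (xs @ [y]) \<union> walk_edges (y # ys)"
  by (induction xs rule: walk_edges.induct) (auto simp: neq_Nil_conv)

lemma walk_edges_rev [simp]: "walk_edges (rev xs) = walk_edges xs"
proof (induction xs rule: walk_edges.induct)
  case (1 x y zs)
  have "walk_edges (rev (x # y # zs)) = walk_edges (rev zs @ [y]) \<union> walk_edges [y, x]"
    using walk_edges_append[of "rev zs" y "[x]"] by simp
  then show ?case using 1 by (auto simp: insert_commute)
qed auto

lemma walk_edges_subset_set: "e \<in> walk_edges xs \<Longrightarrow> e \<subseteq> set xs"
  by (induction xs rule: walk_edges.induct) auto

lemma finite_walk_edges [simp]: "finite (walk_edges xs)"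
  by (induction xs rule: walk_edges.induct) auto

lemma walk_edgesE:
  assumes "e \<in> walk_edges xs"
  obtains p a b q where "xs = p @ a # b # q" "e = {a, b}"
  using assms
proof (induction xs arbitrary: thesis rule: walk_edges.induct)
  case (1 x y zs)
  show ?case
  proof (cases "e = {x, y}")
    case True
    then show ?thesis using "1.prems"(1)[of "[]"] by simp
  next
    case False
    then have "e \<in> walk_edges (y # zs)" using "1.prems"(2) by simp
    then obtain p a b q where "y # zs = p @ a # b # q" "e = {a, b}"
      by (rule "1.IH"[rotated])
    then show ?thesis using "1.prems"(1)[of "x # p"] by simp
  qed
qed auto

lemma walk_edges_join:
  assumes "xs \<noteq> []" "ys \<noteq> []" "last xs = hd ys"
  shows "walk_edges (xs @ tl ys) = walk_edges xs \<union> walk_edges ys"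
    "hd (xs @ tl ys) = hd xs" "last (xs @ tl ys) = last ys"
proof -
  obtain y ys' where ys: "ys = y # ys'" using assms(2) by (cases ys) auto
  have "xs = butlast xs @ [y]" using append_butlast_last_id[OF assms(1)] assms(3) ys by simp
  then show "walk_edges (xs @ tl ys) = walk_edges xs \<union> walk_edges ys"
    using walk_edges_append[of "butlast xs" y ys'] ys by (metis append.assoc append_Cons append_Nil list.sel(3))
  show "hd (xs @ tl ys) = hd xs" using assms(1) by simp
  show "last (xs @ tl ys) = last ys" using assms ys by (cases ys') auto
qed

text \<open>Cutting out the closed subwalk between two visits of the same vertex.\<close>
lemma walk_contains_path:
  assumes "xs \<noteq> []"
  obtains zs where "distinct zs" "zs \<noteq> []" "hd zs = hd xs" "last zs = last xs"
    "walk_edges zs \<subseteq> walk_edges xs"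
  using assms
proof (induction "length xs" arbitrary: xs thesis rule: less_induct)
  case less
  show thesis
  proof (cases "distinct xs")
    case True
    then show thesis using less.prems by blast
  next
    case False
    then obtain p x q r where xs: "xs = p @ [x] @ q @ [x] @ r" using not_distinct_decomp by blast
    let ?ys = "p @ x # r"
    have "walk_edges xs = walk_edges (p @ [x]) \<union> walk_edges (x # q @ [x]) \<union> walk_edges (x # r)"
      unfolding xs using walk_edges_append[of p x "q @ x # r"] walk_edges_append[of "x # q" x r] by auto
    then have edges: "walk_edges ?ys \<subseteq> walk_edges xs" using walk_edges_append[of p x r] by auto
    have ends: "hd ?ys = hd xs" "last ?ys = last xs" unfolding xs by (cases p; cases r; simp)+
    have shorter: "length ?ys < length xs" unfolding xs by simp
    obtain zs where "distinct zs" "zs \<noteq> []" "hd zs = hd ?ys" "last zs = last ?ys"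
      "walk_edges zs \<subseteq> walk_edges ?ys"
      by (rule less.hyps[OF shorter]) simp_all
    then show thesis using less.prems(1) edges ends by auto
  qed
qed

lemma cycle_from_bypass:
  assumes "xs \<noteq> []" "hd xs = a" "last xs = b" "a \<noteq> b" "{a, b} \<in> T"
    and "walk_edges xs \<subseteq> T - {{a, b}}"
  shows "\<exists>c. is_cycle T c"
proof -
  obtain zs where zs: "distinct zs" "zs \<noteq> []" "hd zs = a" "last zs = b" "walk_edges zs \<subseteq> walk_edges xs"
    using walk_contains_path[OF assms(1)] assms(2,3) by blast
  obtain c zs' where zs_eq: "zs = a # c # zs'"
    using zs(2-4) assms(4) by (cases zs; cases "tl zs") auto
  have "zs' \<noteq> []"
  proof
    assume "zs' = []"
    then have "{a, b} \<in> walk_edges zs" using zs_eq zs(4) by simp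
    then show False using zs(5) assms(6) by blast
  qed
  have "is_cycle T (b # zs)"
    unfolding is_cycle_iff using \<open>zs' \<noteq> []\<close> zs zs_eq assms(5,6)
    by (auto simp: insert_commute Suc_le_eq)
  then show ?thesis by blast
qed

lemma acyclic_path_edges_subset:
  assumes acyclic: "\<not> (\<exists>c. is_cycle T c)" and "is_path T u v xs" "is_path T u v ys"
  shows "walk_edges xs \<subseteq> walk_edges ys"
proof
  fix f assume "f \<in> walk_edges xs"
  then obtain p a b q where split: "xs = p @ a # b # q" "f = {a, b}" by (rule walk_edgesE)
  have xs: "hd xs = u" "last xs = v" "distinct xs" "walk_edges xs \<subseteq> T"
    and ys: "ys \<noteq> []" "hd ys = u" "last ys = v" "walk_edges ys \<subseteq> T"
    using assms(2,3) unfolding is_path_iff by auto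
  have edges_xs: "walk_edges xs = walk_edges (p @ [a]) \<union> {{a, b}} \<union> walk_edges (b # q)"
    unfolding split(1) using walk_edges_append[of p a "b # q"] by auto
  have "f \<notin> walk_edges (p @ [a])" "f \<notin> walk_edges (b # q)" "a \<noteq> b"
    using xs(3) walk_edges_subset_set unfolding split by fastforce+
  show "f \<in> walk_edges ys"
  proof (rule ccontr)
    assume "f \<notin> walk_edges ys"
    txt \<open>Walk back along xs from a to u, along ys from u to v, and back along xs from v to b.\<close>
    let ?P = "rev (p @ [a])" and ?Q = "rev (b # q)"
    have P: "?P \<noteq> []" "hd ?P = a" "last ?P = hd ys"
      and Q: "?Q \<noteq> []" "hd ?Q = v" "last ?Q = b"
      using xs(1,2) ys(2) unfolding split(1) by (auto simp: last_rev hd_rev)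
    let ?L1 = "?P @ tl ys"
    let ?L = "?L1 @ tl ?Q"
    note J1 = walk_edges_join[OF P(1) ys(1) P(3)]
    have L1: "walk_edges ?L1 = walk_edges (p @ [a]) \<union> walk_edges ys" "hd ?L1 = a" "last ?L1 = v"
      using J1 P(2) ys(3) by (simp_all only: walk_edges_rev)
    have "?L1 \<noteq> []" "last ?L1 = hd ?Q" using P(1) L1(3) Q(2) by simp_all
    note J2 = walk_edges_join[OF this(1) Q(1) this(2)]
    have "walk_edges ?L = walk_edges ?L1 \<union> walk_edges (b # q)" "hd ?L = a" "last ?L = b"
      using J2 L1(2) Q(3) by (simp_all only: walk_edges_rev)
    moreover have "walk_edges ?L \<subseteq> T - {{a, b}}"
      using calculation(1) L1(1) edges_xs xs(4) ys(4) \<open>f \<notin> walk_edges ys\<close>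
        \<open>f \<notin> walk_edges (p @ [a])\<close> \<open>f \<notin> walk_edges (b # q)\<close> split(2) by blast
    moreover have "{a, b} \<in> T" using edges_xs xs(4) by blast
    ultimately show False using cycle_from_bypass[of ?L a b T] \<open>a \<noteq> b\<close> acyclic by auto
  qed
qed

lemma is_path_rev: "is_path T u v xs \<Longrightarrow> is_path T v u (rev xs)"
  unfolding is_path_iff by (auto simp: hd_rev last_rev)

lemma cov_doubleton_eq:
  assumes "\<not> (\<exists>c. is_cycle T c)" "is_path T a b xs"
  shows "cov T {a, b} = walk_edges xs"
proof
  show "walk_edges xs \<subseteq> cov T {a, b}"
    unfolding cov_def path_edges_eq_walk_edges using assms(2) by blast
next
  show "cov T {a, b} \<subseteq> walk_edges xs"
  proof
    fix f assume "f \<in> cov T {a, b}"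
    then obtain zs u v where zs: "f \<in> walk_edges zs" "{a, b} = {u, v}" "is_path T u v zs"
      unfolding cov_def path_edges_eq_walk_edges by blast
    have "(u = a \<and> v = b) \<or> (u = b \<and> v = a)" using zs(2) unfolding doubleton_eq_iff by blast
    then have "is_path T a b zs \<or> is_path T a b (rev zs)" using zs(3) by (auto dest: is_path_rev)
    then show "f \<in> walk_edges xs"
      using acyclic_path_edges_subset[OF assms(1) _ assms(2)] zs(1) by (metis subsetD walk_edges_rev)
  qed
qed

lemma cov_subset: "cov T e \<subseteq> T"
  unfolding cov_def path_edges_eq_walk_edges is_path_iff by blast

lemma path_degree:
  "distinct xs \<Longrightarrow> xs \<noteq> [] \<Longrightarrow>
    card {e \<in> walk_edges xs. x \<in> e} + (if x = hd xs then 1 else 0) + (if x = last xs then 1 else 0)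
      = (if x \<in> set xs then 2 else 0)"
proof (induction xs rule: walk_edges.induct)
  case (1 y z zs)
  have "{y, z} \<notin> walk_edges (z # zs)" using walk_edges_subset_set "1.prems"(1) by fastforce
  moreover have "{e \<in> walk_edges (y # z # zs). x \<in> e} = (if x \<in> {y, z}
      then insert {y, z} {e \<in> walk_edges (z # zs). x \<in> e} else {e \<in> walk_edges (z # zs). x \<in> e})"
    by auto
  ultimately have "card {e \<in> walk_edges (y # z # zs). x \<in> e}
      = (if x \<in> {y, z} then 1 else 0) + card {e \<in> walk_edges (z # zs). x \<in> e}"
    by simp
  then show ?case using "1.IH" "1.prems" by (auto split: if_splits)
qed auto

lemma even_cov_degree:
  assumes "is_tree V T" "e \<in> pairs V"
  shows "even (card {f \<in> cov T e. x \<in> f} + (if x \<in> e then 1 else 0))"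
proof -
  obtain a b where ab: "e = {a, b}" "a \<in> V" "b \<in> V" "a \<noteq> b" using assms(2) by (rule pairsE)
  then obtain xs where xs: "is_path T a b xs" using assms(1) unfolding is_tree_def by blast
  have "\<not> (\<exists>c. is_cycle T c)" using assms(1) unfolding is_tree_def by blast
  then have "cov T e = walk_edges xs" unfolding ab(1) using xs by (rule cov_doubleton_eq)
  moreover have "distinct xs" "xs \<noteq> []" "hd xs = a" "last xs = b" using xs unfolding is_path_iff by auto
  then have "card {f \<in> walk_edges xs. x \<in> f} + (if x \<in> e then 1 else 0) = (if x \<in> set xs then 2 else 0)"
    using path_degree[of xs x] ab by auto
  ultimately show ?thesis by (auto split: if_splits)
qed

section \<open>Averaging over subsets\<close>

lemma sum_Pow_odd_count:
  assumes "finite E"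
  shows "(\<Sum>R\<in>Pow E. if odd (card {e\<in>R. P e}) then 1 else 0 :: real)
    = (if \<exists>e\<in>E. P e then 2 ^ card E / 2 else 0)"
  using assms
proof (induction E rule: finite_induct)
  case (insert a E)
  let ?c = "\<lambda>R. card {e\<in>R. P e}"
  let ?f = "\<lambda>R. if odd (?c R) then 1 else 0 :: real"
  have "inj_on (insert a) (Pow E)" using insert(2) by (intro inj_onI) (metis Pow_iff insert_ident subsetD)
  moreover have "Pow E \<inter> insert a ` Pow E = {}" using insert(2) by auto
  ultimately have "sum ?f (Pow (insert a E)) = sum ?f (Pow E) + sum (?f \<circ> insert a) (Pow E)"
    unfolding Pow_insert using insert(1) by (simp add: sum.union_disjoint sum.reindex)
  also have "sum (?f \<circ> insert a) (Pow E) = (\<Sum>R\<in>Pow E. if odd (?c R + (if P a then 1 else 0)) then 1 else 0)"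
  proof (rule sum.cong)
    fix R assume "R \<in> Pow E"
    then have "a \<notin> R" "finite R" using insert(1,2) finite_subset by auto
    moreover have "{e \<in> insert a R. P e} = (if P a then insert a {e\<in>R. P e} else {e\<in>R. P e})"
      by auto
    ultimately have "?c (insert a R) = ?c R + (if P a then 1 else 0)" by simp
    then show "(?f \<circ> insert a) R = (if odd (?c R + (if P a then 1 else 0)) then 1 else 0)" by simp
  qed simp
  finally have split: "sum ?f (Pow (insert a E))
      = sum ?f (Pow E) + (\<Sum>R\<in>Pow E. if odd (?c R + (if P a then 1 else 0)) then 1 else 0)" .
  have card: "card (insert a E) = Suc (card E)" using insert(1,2) by simp
  show ?case
  proof (cases "P a")
    case True
    then have "sum ?f (Pow (insert a E)) = (\<Sum>R\<in>Pow E. 1)"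
      unfolding split sum.distrib[symmetric] by (intro sum.cong) auto
    then show ?thesis using True card insert(1) by (simp add: card_Pow)
  next
    case False
    then show ?thesis using split insert(3) card by auto
  qed
qed simp

definition odd_covered :: "'b set \<Rightarrow> ('a \<Rightarrow> 'b set) \<Rightarrow> 'a set \<Rightarrow> 'b set" where
  "odd_covered T cv R = {f\<in>T. odd (card {e\<in>R. f \<in> cv e})}"

lemma sum_Pow_odd_covered:
  fixes c :: "'b \<Rightarrow> real"
  assumes "finite T" "finite E" "\<forall>e\<in>E. cv e \<subseteq> T"
  shows "(\<Sum>R\<in>Pow E. sum c (odd_covered T cv R)) = 2 ^ card E / 2 * sum c (\<Union>e\<in>E. cv e)"
proof -
  let ?U = "\<Union>e\<in>E. cv e"
  have "(\<Sum>R\<in>Pow E. sum c (odd_covered T cv R))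
      = (\<Sum>R\<in>Pow E. \<Sum>f\<in>T. c f * (if odd (card {e\<in>R. f \<in> cv e}) then 1 else 0))"
    unfolding odd_covered_def using assms(1) by (simp add: sum.inter_filter) (intro sum.cong, auto)
  also have "\<dots> = (\<Sum>f\<in>T. c f * (\<Sum>R\<in>Pow E. if odd (card {e\<in>R. f \<in> cv e}) then 1 else 0))"
    by (subst sum.swap) (simp add: sum_distrib_left)
  also have "\<dots> = (\<Sum>f\<in>T. if f \<in> ?U then 2 ^ card E / 2 * c f else 0)"
    using sum_Pow_odd_count[OF assms(2)] by (intro sum.cong) auto
  also have "\<dots> = (\<Sum>f\<in>{f\<in>T. f \<in> ?U}. 2 ^ card E / 2 * c f)"
    by (simp only: sum.inter_filter[OF assms(1)])
  also have "{f\<in>T. f \<in> ?U} = ?U" using assms(3) by blast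
  also have "(\<Sum>f\<in>?U. 2 ^ card E / 2 * c f) = 2 ^ card E / 2 * sum c ?U"
    by (simp add: sum_distrib_left)
  finally show ?thesis .
qed

lemma odd_covered_singletons:
  assumes "R \<subseteq> E"
  shows "odd_covered E (\<lambda>e. {e}) R = R"
proof -
  have "{e\<in>R. f \<in> {e}} = (if f \<in> R then {f} else {})" for f by auto
  then show ?thesis using assms unfolding odd_covered_def by auto
qed

lemma sum_Pow_sum:
  fixes c :: "'b \<Rightarrow> real"
  assumes "finite E"
  shows "(\<Sum>R\<in>Pow E. sum c R) = 2 ^ card E / 2 * sum c E"
proof -
  have "(\<Sum>R\<in>Pow E. sum c R) = (\<Sum>R\<in>Pow E. sum c (odd_covered E (\<lambda>e. {e}) R))"
    by (intro sum.cong) (simp_all add: odd_covered_singletons)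
  then show ?thesis using sum_Pow_odd_covered[OF assms assms, of "\<lambda>e. {e}" c] by simp
qed

text \<open>Each element of E lies in half of the subsets R of E, and each covered element of T is
  covered an odd number of times for half of them, so some R beats the average.\<close>
lemma exists_subset_odd_covered_le:
  fixes c :: "'b \<Rightarrow> real"
  assumes "finite T" "finite E" "\<forall>e\<in>E. cv e \<subseteq> T"
  obtains R where "R \<subseteq> E" "sum c R - sum c (odd_covered T cv R) \<le> (sum c E - sum c (\<Union>e\<in>E. cv e)) / 2"
proof -
  let ?avg = "(sum c E - sum c (\<Union>e\<in>E. cv e)) / 2"
  let ?gain = "\<lambda>R. sum c R - sum c (odd_covered T cv R)"
  have total: "(\<Sum>R\<in>Pow E. ?gain R) = (\<Sum>R\<in>Pow E. ?avg)"
    using sum_Pow_sum[OF assms(2), of c] sum_Pow_odd_covered[OF assms, of c] assms(2)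
    by (simp add: sum_subtractf card_Pow right_diff_distrib)
  show thesis
  proof (rule ccontr)
    assume "\<not> thesis"
    then have "\<forall>R\<in>Pow E. ?avg < ?gain R" using that by (metis PowD not_le)
    then have "(\<Sum>R\<in>Pow E. ?avg) < (\<Sum>R\<in>Pow E. ?gain R)"
      using assms(2) by (intro sum_strict_mono) auto
    then show False using total by simp
  qed
qed

lemma card_filter_eq_sum: "finite A \<Longrightarrow> card {x\<in>A. P x} = (\<Sum>x\<in>A. if P x then 1 else 0)"
  by (simp only: card_eq_sum sum.inter_filter)

text \<open>Parity of the degree of x: count the incidences between R and the edges at x in two ways.\<close>
lemma even_odd_covered_degree:
  fixes cv :: "'a set \<Rightarrow> 'a set set"
  assumes "finite T" "finite R" "\<forall>e\<in>R. cv e \<subseteq> T"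
    and "\<forall>e\<in>R. even (card {f\<in>cv e. x \<in> f} + (if x \<in> e then 1 else 0))"
  shows "even (card {f\<in>odd_covered T cv R. x \<in> f} + card {e\<in>R. x \<in> e})"
proof -
  let ?Tx = "{f\<in>T. x \<in> f}"
  have "finite ?Tx" using assms(1) by simp
  have "(\<Sum>f\<in>?Tx. card {e\<in>R. f \<in> cv e}) = (\<Sum>f\<in>?Tx. \<Sum>e\<in>R. if f \<in> cv e then 1 else 0)"
    by (simp only: card_filter_eq_sum[OF assms(2)])
  also have "\<dots> = (\<Sum>e\<in>R. \<Sum>f\<in>?Tx. if f \<in> cv e then 1 else 0)" by (rule sum.swap)
  also have "\<dots> = (\<Sum>e\<in>R. card {f\<in>cv e. x \<in> f})"
  proof (rule sum.cong)
    fix e assume "e \<in> R"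
    then have "{f\<in>cv e. x \<in> f} = {f\<in>?Tx. f \<in> cv e}" using assms(3) by auto
    then show "(\<Sum>f\<in>?Tx. if f \<in> cv e then 1 else 0) = card {f\<in>cv e. x \<in> f}"
      by (simp only: card_filter_eq_sum[OF \<open>finite ?Tx\<close>])
  qed simp
  finally have "even (card {f\<in>?Tx. odd (card {e\<in>R. f \<in> cv e})}) \<longleftrightarrow> even (\<Sum>e\<in>R. card {f\<in>cv e. x \<in> f})"
    using even_sum_iff[OF \<open>finite ?Tx\<close>, of "\<lambda>f. card {e\<in>R. f \<in> cv e}"] by argo
  moreover have "even (\<Sum>e\<in>R. card {f\<in>cv e. x \<in> f} + (if x \<in> e then 1 else 0))"
    using assms(4) by (intro dvd_sum) auto
  moreover have "(\<Sum>e\<in>R. card {f\<in>cv e. x \<in> f} + (if x \<in> e then 1 else 0))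
      = (\<Sum>e\<in>R. card {f\<in>cv e. x \<in> f}) + card {e\<in>R. x \<in> e}"
    by (simp only: sum.distrib card_filter_eq_sum[OF assms(2)])
  moreover have "{f\<in>?Tx. odd (card {e\<in>R. f \<in> cv e})} = {f\<in>odd_covered T cv R. x \<in> f}"
    unfolding odd_covered_def by auto
  ultimately show ?thesis by simp
qed

text \<open>Every edge of T at a vertex of W is an edge of the closed walk W, since R avoids W.\<close>
lemma walk_stays_in_closed_walk:
  assumes "T \<subseteq> set_mset (cycle_edges W + R)" "\<forall>e\<in>#R. e \<inter> set W = {}"
  shows "xs \<noteq> [] \<Longrightarrow> walk_edges xs \<subseteq> T \<Longrightarrow> hd xs \<in> set W \<Longrightarrow> set xs \<subseteq> set W"
proof (induction xs rule: walk_edges.induct)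
  case (1 y z zs)
  have "{y, z} \<in> T" "y \<in> set W" using "1.prems"(2,3) by simp_all
  have "{y, z} \<notin># R"
  proof
    assume "{y, z} \<in># R"
    then have "{y, z} \<inter> set W = {}" by (rule assms(2)[rule_format])
    then show False using \<open>y \<in> set W\<close> by blast
  qed
  then have "{y, z} \<in># cycle_edges W" using assms(1) \<open>{y, z} \<in> T\<close> by auto
  then have "z \<in> set W" by (rule cycle_edges_elem) (auto simp: doubleton_eq_iff)
  moreover have "walk_edges (z # zs) \<subseteq> T" using "1.prems"(2) by simp
  ultimately have "set (z # zs) \<subseteq> set W" using "1.IH" by simp
  then show ?case using \<open>y \<in> set W\<close> by simp
qed auto

text \<open>Euler's theorem (splicing into the one-vertex walk at a root) followed by shortcutting.\<close>
lemma TSP_le_even_multigraph: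
  assumes "finite V" "is_metric V w" "is_tree V T"
    and "set_mset M \<subseteq> pairs V" "\<forall>x. even (mdeg x M)" "T \<subseteq> set_mset M"
  shows "TSP V w \<le> mweight w M"
proof -
  obtain r where r: "r \<in> V" using assms(3) unfolding is_tree_def by blast
  have "loopless M" using assms(4) card_pairs unfolding loopless_def by blast
  obtain W R where W: "cycle_edges W + R = cycle_edges [r] + M" "R \<subseteq># M"
    "set [r] \<subseteq> set W" "set W \<subseteq> set [r] \<union> \<Union>(set_mset M)" "\<forall>e\<in>#R. e \<inter> set W = {}"
    by (rule splice_even_mdeg[OF \<open>loopless M\<close> assms(5) list.simps(3)])
  have loop: "cycle_edges [r] = {#{r}#}" by (simp add: cycle_edges_def)
  have T_W: "T \<subseteq> set_mset (cycle_edges W + R)" using assms(6) W(1) by (auto simp: loop)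
  have "V \<subseteq> set W"
  proof
    fix u assume "u \<in> V"
    then obtain xs where "is_path T r u xs" using assms(3) r unfolding is_tree_def by blast
    then have xs: "xs \<noteq> []" "hd xs = r" "last xs = u" "walk_edges xs \<subseteq> T" unfolding is_path_iff by auto
    then have "set xs \<subseteq> set W" using walk_stays_in_closed_walk[OF T_W W(5)] W(3) by simp
    then show "u \<in> set W" using last_in_set[OF xs(1)] xs(3) by blast
  qed
  moreover have "\<Union>(set_mset M) \<subseteq> V" using assms(4) by (auto dest: pairs_subset)
  then have "set W \<subseteq> V" using W(4) r by (simp add: subset_iff) (metis UnionI)
  ultimately have "TSP V w \<le> mweight w (cycle_edges W)"
    using TSP_le_closed_walk[OF assms(1,2)] by blast
  moreover have "mweight w (cycle_edges W) + mweight w R = mweight w M"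
    using arg_cong[OF W(1), of "mweight w"] ew_doubleton[OF assms(2) r r] metric_zero[OF assms(2) r]
    by (simp add: loop)
  moreover have "0 \<le> mweight w R"
    using W(2) assms(4) ew_pairs_nonneg[OF assms(2)] by (auto intro: mweight_nonneg dest: mset_subset_eqD)
  ultimately show ?thesis by linarith
qed

text \<open>In T + (T - D) + R, where D is the set of tree edges covered an odd number of times by R,
  removing D from the second copy of T repairs exactly the parities spoiled by R.\<close>
lemma TSP_le_tree_plus_odd_cover_correction:
  assumes "finite V" "is_metric V w" "is_tree V T" "R \<subseteq> pairs V"
  shows "TSP V w \<le> 2 * wt w T - wt w (odd_covered T (cov T) R) + wt w R"
proof -
  let ?D = "odd_covered T (cov T) R"
  define M where "M = mset_set T + mset_set (T - ?D) + mset_set R"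
  have T: "T \<subseteq> pairs V" using assms(3) unfolding is_tree_def by blast
  then have fin: "finite T" "finite R" using finite_pairs[OF assms(1)] assms(4) finite_subset by auto
  have D: "?D \<subseteq> T" unfolding odd_covered_def by blast
  have "even (mdeg x M)" for x
  proof -
    have "even (card {f\<in>?D. x \<in> f} + card {e\<in>R. x \<in> e})"
      using even_odd_covered_degree[OF fin] cov_subset even_cov_degree[OF assms(3)] assms(4) by blast
    moreover have fin_Tx: "finite {f\<in>T. x \<in> f}" using fin(1) by simp
    moreover have sub: "{f\<in>?D. x \<in> f} \<subseteq> {f\<in>T. x \<in> f}" using D by blast
    moreover have "{f\<in>T - ?D. x \<in> f} = {f\<in>T. x \<in> f} - {f\<in>?D. x \<in> f}" by blast
    then have "card {f\<in>T - ?D. x \<in> f} = card {f\<in>T. x \<in> f} - card {f\<in>?D. x \<in> f}"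
      using card_Diff_subset[OF finite_subset[OF sub fin_Tx] sub] by simp
    ultimately show ?thesis
      unfolding M_def using fin card_mono[OF fin_Tx sub] by (simp add: mdeg_mset_set)
  qed
  moreover have "set_mset M \<subseteq> pairs V" "T \<subseteq> set_mset M"
    unfolding M_def using fin T assms(4) by auto
  ultimately have "TSP V w \<le> mweight w M" by (intro TSP_le_even_multigraph[OF assms(1-3)]) blast+
  also have "mweight w M = 2 * wt w T - wt w ?D + wt w R"
    unfolding M_def using fin D by (simp add: wt_def sum_diff)
  finally show ?thesis .
qed

lemma opt_adv_witnesses:
  assumes "finite V"
  obtains Ef where "\<forall>S. Ef S \<subseteq> pairs V" "opt_adv V w T = (\<lambda>S. adv w T (Ef S) S)"
proof -
  have "\<exists>E'. E' \<subseteq> pairs V \<and> opt_adv V w T S = adv w T E' S" for S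
  proof -
    let ?A = "{adv w T E' S | E'. E' \<subseteq> pairs V \<and> (\<forall>e\<in>E'. e \<inter> fst S \<noteq> {})}"
    have "?A \<subseteq> (\<lambda>E'. adv w T E' S) ` Pow (pairs V)" by blast
    then have "finite ?A" using finite_pairs[OF assms] by (simp add: finite_subset)
    moreover have "adv w T {} S \<in> ?A" by blast
    ultimately have "Max ?A \<in> ?A" by (intro Max_in) auto
    then show ?thesis unfolding opt_adv_def by blast
  qed
  then obtain Ef where "\<forall>S. Ef S \<subseteq> pairs V \<and> opt_adv V w T S = adv w T (Ef S) S" by metis
  then show thesis using that[of Ef] by (simp add: fun_eq_iff)
qed

lemma finite_subtree_family:
  assumes "finite V" "finite T" "\<forall>S\<in>\<T>. is_subtree V T S"
  shows "finite \<T>"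
proof -
  have "\<T> \<subseteq> Pow V \<times> Pow T"
    using assms(3) unfolding is_subtree_def by (intro subsetI) (simp add: mem_Times_iff)
  then show ?thesis using assms(1,2) finite_subset by blast
qed

lemma sum_UN_le:
  fixes f :: "'b \<Rightarrow> real"
  assumes "finite I" "\<forall>i\<in>I. finite (A i)" "\<forall>x\<in>\<Union>(A ` I). 0 \<le> f x"
  shows "sum f (\<Union>(A ` I)) \<le> (\<Sum>i\<in>I. sum f (A i))"
  using assms
proof (induction I rule: finite_induct)
  case (insert i I)
  have "sum f (\<Union>(A ` insert i I)) = sum f (A i) + sum f (\<Union>(A ` I)) - sum f (A i \<inter> \<Union>(A ` I))"
    using insert.prems insert.hyps(1) by (simp add: sum_Un)
  also have "\<dots> \<le> sum f (A i) + sum f (\<Union>(A ` I))"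
    using sum_nonneg[of "A i \<inter> \<Union>(A ` I)" f] insert.prems(2) by force
  also have "sum f (\<Union>(A ` I)) \<le> (\<Sum>i\<in>I. sum f (A i))" using insert by simp
  finally show ?case using insert.hyps by simp
qed simp

text \<open>Edge-disjointness: the covered parts of distinct subtrees are counted only once.\<close>
lemma sum_adv_le_cover_gain:
  assumes "finite V" "is_metric V w" "T \<subseteq> pairs V" "finite \<T>"
    and "\<forall>S1\<in>\<T>. \<forall>S2\<in>\<T>. S1 \<noteq> S2 \<longrightarrow> snd S1 \<inter> snd S2 = {}" "\<forall>S\<in>\<T>. Ef S \<subseteq> pairs V"
  shows "(\<Sum>S\<in>\<T>. adv w T (Ef S) S) \<le> wt w (covs T (\<Union>(Ef ` \<T>))) - wt w (\<Union>(Ef ` \<T>))"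
proof -
  let ?E = "\<Union>(Ef ` \<T>)"
  define A where "A S = covs T (Ef S) \<inter> snd S" for S
  have "covs T ?E \<subseteq> T" using cov_subset unfolding covs_def by blast
  then have cov_E: "finite (covs T ?E)" "\<forall>f\<in>covs T ?E. 0 \<le> ew w f"
    using assms(3) finite_subset[OF _ finite_pairs[OF assms(1)]] ew_pairs_nonneg[OF assms(2)] by auto
  have A: "\<forall>S\<in>\<T>. A S \<subseteq> covs T ?E" unfolding A_def covs_def by blast
  have "\<forall>S\<in>\<T>. finite (A S)" using A cov_E(1) finite_subset by blast
  moreover have "\<forall>S1\<in>\<T>. \<forall>S2\<in>\<T>. S1 \<noteq> S2 \<longrightarrow> A S1 \<inter> A S2 = {}"
    using assms(5) unfolding A_def by blast
  ultimately have "(\<Sum>S\<in>\<T>. wt w (A S)) = wt w (\<Union>(A ` \<T>))"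
    unfolding wt_def by (rule sum.UNION_disjoint[OF assms(4), symmetric])
  also have "\<dots> \<le> wt w (covs T ?E)"
    unfolding wt_def using A cov_E by (intro sum_mono2) auto
  finally have covered: "(\<Sum>S\<in>\<T>. wt w (A S)) \<le> wt w (covs T ?E)" .
  have "wt w ?E \<le> (\<Sum>S\<in>\<T>. wt w (Ef S))"
    unfolding wt_def using assms(4,6) finite_pairs[OF assms(1)] ew_pairs_nonneg[OF assms(2)]
    by (intro sum_UN_le) (auto intro: finite_subset)
  then show ?thesis
    using covered unfolding adv_def A_def by (simp add: sum_subtractf)
qed

theorem mainTheorem1:
  fixes V :: "'a set" and w :: "'a \<Rightarrow> 'a \<Rightarrow> real" and T :: "'a set set"
    and \<T> :: "('a set \<times> 'a set set) set"
  assumes "finite V" and "card V \<ge> 3"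
    and "is_metric V w"
    and "is_mst V w T"
    and "\<forall>S\<in>\<T>. is_subtree V T S"
    and "\<forall>S1\<in>\<T>. \<forall>S2\<in>\<T>. S1 \<noteq> S2 \<longrightarrow> snd S1 \<inter> snd S2 = {}"
  shows "TSP V w \<le> 2 * MST V w - (1/2) * (\<Sum>S\<in>\<T>. opt_adv V w T S)"
proof -
  have tree: "is_tree V T" and "wt w T = MST V w"
    using assms(4) unfolding is_mst_def spanning_tree_def by auto
  have T: "T \<subseteq> pairs V" using tree unfolding is_tree_def by blast
  then have "finite T" using finite_pairs[OF assms(1)] finite_subset by blast
  then have "finite \<T>" using finite_subtree_family assms(1,5) by blast
  obtain Ef where Ef: "\<forall>S. Ef S \<subseteq> pairs V" "opt_adv V w T = (\<lambda>S. adv w T (Ef S) S)"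
    by (rule opt_adv_witnesses[OF assms(1)])
  define E where "E = \<Union>(Ef ` \<T>)"
  have "E \<subseteq> pairs V" using Ef unfolding E_def by blast
  then have "finite E" using finite_pairs[OF assms(1)] finite_subset by blast
  obtain R where R: "R \<subseteq> E" "wt w R - wt w (odd_covered T (cov T) R) \<le> (wt w E - wt w (covs T E)) / 2"
    using exists_subset_odd_covered_le[OF \<open>finite T\<close> \<open>finite E\<close>, of "cov T" "ew w"] cov_subset
    unfolding wt_def covs_def by blast
  have "TSP V w \<le> 2 * wt w T - wt w (odd_covered T (cov T) R) + wt w R"
    using TSP_le_tree_plus_odd_cover_correction[OF assms(1,3) tree] R(1) \<open>E \<subseteq> pairs V\<close> by blast
  moreover have "(\<Sum>S\<in>\<T>. opt_adv V w T S) \<le> wt w (covs T E) - wt w E"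
    using sum_adv_le_cover_gain[OF assms(1,3) T \<open>finite \<T>\<close> assms(6), of Ef] Ef(1)
    unfolding E_def Ef(2) by simp
  ultimately show ?thesis using R(2) \<open>wt w T = MST V w\<close> by (simp add: field_simps)
qed

end
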